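(* Let $\Lambda$ be a finite cubical complex, $k\ge1$, $q\ge2$ an integer, $x_{\mathbf{c}}\in(0,1)$ for $\mathbf{c}\in\Lambda_k$. Let $\Omega=\{0,1\}^{\Lambda_k}$, $\Sigma=\ker(\partial_k)\subset C_k$, $f:\Omega\to2^\Sigma$, $f(\omega)=\Sigma^\downarrow(\omega):=\{\eta\in\Sigma\mid\mathrm{supp}(\eta)\subset\omega\}$, and $$\rho[\omega]\propto\prod_{\mathbf{c}\in\Lambda_k(\omega)}\frac{x_{\mathbf{c}}}{1-x_{\mathbf{c}}}\ (\omega\in\Omega),\qquad\gamma[\eta]\propto1\ (\eta\in\Sigma).$$ Let $\mathscr{P}$ be the probability measure on $\Omega\times\Sigma$ with $\mathscr{P}[\omega,\eta]\propto\rho[\omega]\gamma[\eta]\mathbf{1}[\eta\in f(\omega)]$. Then: (a) The marginal $\mathscr{P}_\Sigma$ equals $\ell^q_{\Lambda_k,x}$, and for $\omega\in\Omega$ the conditional measure $\mathscr{P}[\cdot\mid\omega]$ is uniform on $\Sigma^\downarrow(\omega)$. (b) The marginal $\mathscr{P}_\Omega$ equals $\phi^q_{\Lambda_k,p}$ with $p$ determined by $x_{\mathbf{c}}=\frac{p_{\mathbf{c}}}{p_{\mathbf{c}}+q(1-p_{\mathbf{c}})}$. For each $\eta\in\Sigma$, $\mathscr{P}[\cdot\mid\eta]=\mathbb{P}_x\cup\delta_{\mathrm{supp}(\eta)}$, Bernoulli percolation on $\Lambda_k$ with parameters $(x_{\mathbf{c}})$ conditioned on all $k$-cells of $\mathrm{supp}(\eta)$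 being open.
   Context: A finite cubical complex $\Lambda$ consists of finite sets $\Lambda_j$ of $j$-cells (copies of $\{0,1\}^j$) closed under taking faces; $F_i^\pm(\mathbf{c})$ are the faces $\{x_i=1\},\{x_i=0\}$ of a $j$-cell. Each $j$-cell ($j\ge1$) has two orientations (for $j\ge2$ an ordering $e_1\wedge\dots\wedge e_j$ of the cell's edges at a root vertex $v$ modulo even permutations, reversed when moving the root across an edge; faces $F_i^\pm(\mathfrak{c})$ containing $v$ inherit $e_1\wedge\cdots\wedge\widehat{e_i}\wedge\cdots\wedge e_j$ rooted at $v$; for $j=1$ the orientations $(v,w),(w,v)$). $C_j=\{\sigma\in(\mathbb{Z}/q\mathbb{Z})^{\mathcal{O}(\Lambda_j)}\mid\sigma_{-\mathfrak{c}}=-\sigma_{\mathfrak{c}}\}$, $C_0=(\mathbb{Z}/q\mathbb{Z})^{\Lambda_0}$; $\partial_j:C_j\to C_{j-1}$ is linear with $\partial_j\mathbf{1}^{\mathfrak{c}}=\sum_{i=1}^j(-1)^{i+1}(\mathbf{1}^{F_i^+(\mathfrak{c})}-\mathbf{1}^{F_i^-(\mathfrak{c})})$ ($j\ge2$), $\partial_1\mathbf{1}^{(v,w)}=\mathbf{1}_w-\mathbf{1}_v$, $\partial_0:=0$. $\mathrm{supp}(\eta)$ is the set of $k$-cells on which $\eta$ is nonzero. The $q$-flow model is $\ell^q_{\Lambda_k,x}[\eta]\propto\prod_{\mathbf{c}\in\mathrm{supp}(\eta)}x_{\mathbf{c}}$ on $\ker(\partial_k)$. Elements $\omega\in\{0,1\}^{\Lambda_k}$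 are identified with $k$-spanning subcomplexes (all cells of dimension $<k$, the $k$-cells $\Lambda_k(\omega)$, nothing higher); $\partial^\omega_k$ is $\partial_k$ restricted to chains supported on $\Lambda_k(\omega)$, $\partial^\omega_{k-1}=\partial_{k-1}$, and $\phi^q_{\Lambda_k,p}[\omega]\propto\frac{|\ker(\partial^\omega_{k-1})|}{|\mathrm{Im}(\partial^\omega_k)|}\prod_{\mathbf{c}\in\Lambda_k(\omega)}\frac{p_{\mathbf{c}}}{1-p_{\mathbf{c}}}$. $\mathbb{P}_x$ is Bernoulli percolation on $\Lambda_k$; $\pi\cup\nu$ is the law of the union of independent samples; $\delta$ is a Dirac mass. *)

theory Defs
  imports "HOL-Combinatorics.Permutations" Complex_Main
begin

text \<open>A parametrised j-cell is an injective vertex map c from the cube {0,1}^j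
  (boolean lists of length j) into a vertex type 'v, made extensional (value
  undefined off the cube). A geometric j-cell is an orbit of such maps under the
  symmetry group of the cube (signed permutations of the coordinates).\<close>

definition cube :: "nat \<Rightarrow> bool list set" where
  "cube j = {xs. length xs = j}"

definition is_par :: "nat \<Rightarrow> (bool list \<Rightarrow> 'v) \<Rightarrow> bool" where
  "is_par j c \<longleftrightarrow> inj_on c (cube j) \<and> (\<forall>xs. length xs \<noteq> j \<longrightarrow> c xs = undefined)"

text \<open>Symmetries of {0,1}^j: a permutation of the coordinates together with a set of
  coordinates to reflect (x_i -> 1 - x_i).\<close>

definition SymG :: "nat \<Rightarrow> ((nat \<Rightarrow> nat) \<times> (nat \<Rightarrow> bool)) set" where
  "SymG j = {(\<pi>, s). \<pi> permutes {..<j} \<and> (\<forall>i. j \<le> i \<longrightarrow> \<not> s i)}"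

definition act :: "nat \<Rightarrow> (nat \<Rightarrow> nat) \<times> (nat \<Rightarrow> bool) \<Rightarrow> bool list \<Rightarrow> bool list" where
  "act j g xs = map (\<lambda>i. (xs ! (fst g i)) \<noteq> snd g i) [0..<j]"

definition reparam :: "nat \<Rightarrow> (bool list \<Rightarrow> 'v) \<Rightarrow> (nat \<Rightarrow> nat) \<times> (nat \<Rightarrow> bool) \<Rightarrow> (bool list \<Rightarrow> 'v)" where
  "reparam j c g = (\<lambda>xs. if length xs = j then c (act j g xs) else undefined)"

text \<open>Relative orientation of c and (reparam j c g): sign of the permutation, times
  -1 for every reflected coordinate (moving the root across an edge reverses the
  orientation).\<close>

definition symsign :: "nat \<Rightarrow> (nat \<Rightarrow> nat) \<times> (nat \<Rightarrow> bool) \<Rightarrow> int" where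
  "symsign j g = sign (fst g) * (-1) ^ card {i. i < j \<and> snd g i}"

text \<open>Face F_{i+1}^{+} (b = True, i.e. x_{i+1} = 1) resp. F_{i+1}^{-} (b = False) of a
  parametrised j-cell, for 0-based i < j, with its inherited coordinate
  parametrisation (hence inherited orientation).\<close>

definition face :: "nat \<Rightarrow> (bool list \<Rightarrow> 'v) \<Rightarrow> nat \<Rightarrow> bool \<Rightarrow> (bool list \<Rightarrow> 'v)" where
  "face j c i b = (\<lambda>ys. if length ys = j - 1 then c (take i ys @ b # drop i ys) else undefined)"

text \<open>L j is the set of all parametrisations of the j-cells of the complex.\<close>

definition cubical_complex :: "(nat \<Rightarrow> (bool list \<Rightarrow> 'v) set) \<Rightarrow> bool" where
  "cubical_complex L \<longleftrightarrow>
     (\<exists>N. \<forall>j\<ge>N. L j = {}) \<and>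
     (\<forall>j. finite (L j)) \<and>
     (\<forall>j. \<forall>c\<in>L j. is_par j c) \<and>
     (\<forall>j. \<forall>c\<in>L j. \<forall>g\<in>SymG j. reparam j c g \<in> L j) \<and>
     (\<forall>j. \<forall>c\<in>L j. \<forall>i<j. \<forall>b. face j c i b \<in> L (j - 1))"

definition orbit :: "nat \<Rightarrow> (bool list \<Rightarrow> 'v) \<Rightarrow> (bool list \<Rightarrow> 'v) set" where
  "orbit j c = {reparam j c g | g. g \<in> SymG j}"

definition cells :: "(nat \<Rightarrow> (bool list \<Rightarrow> 'v) set) \<Rightarrow> nat \<Rightarrow> (bool list \<Rightarrow> 'v) set set" where
  "cells L j = orbit j ` L j"

definition rep :: "(bool list \<Rightarrow> 'v) set \<Rightarrow> (bool list \<Rightarrow> 'v)" where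
  "rep C = (SOME c. c \<in> C)"

text \<open>A j-chain is a function on parametrised j-cells with values in {0..<q}
  (representing Z/qZ) that is antisymmetric under orientation reversal:
  its value on reparam j c g is symsign j g times its value on c. This is the
  group C_j (for j = 0 the condition is vacuous and C_0 = (Z/qZ)^{\<Lambda>_0}).\<close>

definition chains :: "(nat \<Rightarrow> (bool list \<Rightarrow> 'v) set) \<Rightarrow> int \<Rightarrow> nat \<Rightarrow> ((bool list \<Rightarrow> 'v) \<Rightarrow> int) set" where
  "chains L q j = {\<sigma>. (\<forall>c. c \<notin> L j \<longrightarrow> \<sigma> c = 0) \<and> (\<forall>c\<in>L j. 0 \<le> \<sigma> c \<and> \<sigma> c < q) \<and>
      (\<forall>c\<in>L j. \<forall>g\<in>SymG j. \<sigma> (reparam j c g) = (symsign j g * \<sigma> c) mod q)}"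

definition unitc :: "nat \<Rightarrow> int \<Rightarrow> (bool list \<Rightarrow> 'v) \<Rightarrow> ((bool list \<Rightarrow> 'v) \<Rightarrow> int)" where
  "unitc j q c = (\<lambda>d. (\<Sum>g\<in>SymG j. if d = reparam j c g then symsign j g else 0) mod q)"

text \<open>The boundary map \<partial>_j : C_j \<rightarrow> C_{j-1}, the linear extension of
  \<partial>_j 1^c = \<Sum>_{i=1}^j (-1)^{i+1} (1^{F_i^+ c} - 1^{F_i^- c}) (0-based index i here);
  for j = 0 it is the zero map.\<close>

definition bd :: "(nat \<Rightarrow> (bool list \<Rightarrow> 'v) set) \<Rightarrow> int \<Rightarrow> nat \<Rightarrow> ((bool list \<Rightarrow> 'v) \<Rightarrow> int) \<Rightarrow> ((bool list \<Rightarrow> 'v) \<Rightarrow> int)" where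
  "bd L q j \<sigma> = (\<lambda>d. (\<Sum>C\<in>cells L j. \<sigma> (rep C) *
       (\<Sum>i<j. (-1) ^ i * (unitc (j - 1) q (face j (rep C) i True) d
                           - unitc (j - 1) q (face j (rep C) i False) d))) mod q)"

definition supp :: "(nat \<Rightarrow> (bool list \<Rightarrow> 'v) set) \<Rightarrow> nat \<Rightarrow> ((bool list \<Rightarrow> 'v) \<Rightarrow> int) \<Rightarrow> (bool list \<Rightarrow> 'v) set set" where
  "supp L j \<eta> = {C \<in> cells L j. \<exists>c\<in>C. \<eta> c \<noteq> 0}"

definition cycles :: "(nat \<Rightarrow> (bool list \<Rightarrow> 'v) set) \<Rightarrow> int \<Rightarrow> nat \<Rightarrow> ((bool list \<Rightarrow> 'v) \<Rightarrow> int) set" where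
  "cycles L q j = {\<eta> \<in> chains L q j. bd L q j \<eta> = (\<lambda>_. 0)}"

text \<open>\<Sigma>\<down>(\<omega>) for \<omega> a set of k-cells (identified with an element of {0,1}^{\<Lambda>_k}).\<close>

definition sigma_down :: "(nat \<Rightarrow> (bool list \<Rightarrow> 'v) set) \<Rightarrow> int \<Rightarrow> nat \<Rightarrow> (bool list \<Rightarrow> 'v) set set \<Rightarrow> ((bool list \<Rightarrow> 'v) \<Rightarrow> int) set" where
  "sigma_down L q k \<omega> = {\<eta> \<in> cycles L q k. supp L k \<eta> \<subseteq> \<omega>}"

definition flow_model :: "(nat \<Rightarrow> (bool list \<Rightarrow> 'v) set) \<Rightarrow> int \<Rightarrow> nat \<Rightarrow> ((bool list \<Rightarrow> 'v) set \<Rightarrow> real) \<Rightarrow> ((bool list \<Rightarrow> 'v) \<Rightarrow> int) \<Rightarrow> real" where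
  "flow_model L q k x \<eta> = (\<Prod>C\<in>supp L k \<eta>. x C) / (\<Sum>\<eta>'\<in>cycles L q k. \<Prod>C\<in>supp L k \<eta>'. x C)"

definition rc_weight :: "(nat \<Rightarrow> (bool list \<Rightarrow> 'v) set) \<Rightarrow> int \<Rightarrow> nat \<Rightarrow> ((bool list \<Rightarrow> 'v) set \<Rightarrow> real) \<Rightarrow> (bool list \<Rightarrow> 'v) set set \<Rightarrow> real" where
  "rc_weight L q k p \<omega> =
     real (card {\<sigma> \<in> chains L q (k - 1). bd L q (k - 1) \<sigma> = (\<lambda>_. 0)})
     / real (card (bd L q k ` {\<sigma> \<in> chains L q k. supp L k \<sigma> \<subseteq> \<omega>}))
     * (\<Prod>C\<in>\<omega>. p C / (1 - p C))"

definition rc_model :: "(nat \<Rightarrow> (bool list \<Rightarrow> 'v) set) \<Rightarrow> int \<Rightarrow> nat \<Rightarrow> ((bool list \<Rightarrow> 'v) set \<Rightarrow> real) \<Rightarrow> (bool list \<Rightarrow> 'v) set set \<Rightarrow> real" where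
  "rc_model L q k p \<omega> = rc_weight L q k p \<omega> / (\<Sum>\<omega>'\<in>Pow (cells L k). rc_weight L q k p \<omega>')"

text \<open>Bernoulli percolation \<P>_x on a finite set of cells, and the law of the union of
  a sample of it with a fixed set A (i.e. \<P>_x \<union> \<delta>_A).\<close>

definition bernoulli_perc :: "'c set \<Rightarrow> ('c \<Rightarrow> real) \<Rightarrow> 'c set \<Rightarrow> real" where
  "bernoulli_perc \<Lambda> x \<omega> = (\<Prod>C\<in>\<Lambda>. if C \<in> \<omega> then x C else 1 - x C)"

definition union_law :: "'c set \<Rightarrow> ('c \<Rightarrow> real) \<Rightarrow> 'c set \<Rightarrow> 'c set \<Rightarrow> real" where
  "union_law \<Lambda> x A \<omega> = (\<Sum>\<omega>'\<in>{\<omega>' \<in> Pow \<Lambda>. \<omega>' \<union> A = \<omega>}. bernoulli_perc \<Lambda> x \<omega>')"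

definition rho_w :: "((bool list \<Rightarrow> 'v) set \<Rightarrow> real) \<Rightarrow> (bool list \<Rightarrow> 'v) set set \<Rightarrow> real" where
  "rho_w x \<omega> = (\<Prod>C\<in>\<omega>. x C / (1 - x C))"

definition joint_w :: "(nat \<Rightarrow> (bool list \<Rightarrow> 'v) set) \<Rightarrow> int \<Rightarrow> nat \<Rightarrow> ((bool list \<Rightarrow> 'v) set \<Rightarrow> real) \<Rightarrow> (bool list \<Rightarrow> 'v) set set \<Rightarrow> ((bool list \<Rightarrow> 'v) \<Rightarrow> int) \<Rightarrow> real" where
  "joint_w L q k x \<omega> \<eta> = rho_w x \<omega> * 1 * (if \<eta> \<in> sigma_down L q k \<omega> then 1 else 0)"

definition jointP :: "(nat \<Rightarrow> (bool list \<Rightarrow> 'v) set) \<Rightarrow> int \<Rightarrow> nat \<Rightarrow> ((bool list \<Rightarrow> 'v) set \<Rightarrow> real) \<Rightarrow> (bool list \<Rightarrow> 'v) set set \<Rightarrow> ((bool list \<Rightarrow> 'v) \<Rightarrow> int) \<Rightarrow> real" where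
  "jointP L q k x \<omega> \<eta> = joint_w L q k x \<omega> \<eta> /
     (\<Sum>\<omega>'\<in>Pow (cells L k). \<Sum>\<eta>'\<in>cycles L q k. joint_w L q k x \<omega>' \<eta>')"

definition marg_Sigma where
  "marg_Sigma L q k x \<eta> = (\<Sum>\<omega>\<in>Pow (cells L k). jointP L q k x \<omega> \<eta>)"

definition marg_Omega where
  "marg_Omega L q k x \<omega> = (\<Sum>\<eta>\<in>cycles L q k. jointP L q k x \<omega> \<eta>)"

definition cond_given_omega where
  "cond_given_omega L q k x \<omega> \<eta> = jointP L q k x \<omega> \<eta> / marg_Omega L q k x \<omega>"

definition cond_given_eta where
  "cond_given_eta L q k x \<eta> \<omega> = jointP L q k x \<omega> \<eta> / marg_Sigma L q k x \<eta>"

end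

(*
  Summing the coupling weight over \<eta> gives \<rho>[\<omega>] |\<Sigma>\<down>(\<omega>)|; summing it over \<omega> gives, up to the
  factor \<Prod>(1 - x_c), the Bernoulli probability that all cells of supp \<eta> are open, i.e.
  \<Prod>_{supp \<eta>} x_c.  This yields the flow model as the \<Sigma>-marginal and both conditional laws.
  For the \<Omega>-marginal, the chains supported in \<omega> are determined by one coefficient per cell
  (antisymmetry fixes the other orientations), so there are q^|\<omega>| of them, and the fibres of
  \<partial>_k on them are cosets of \<Sigma>\<down>(\<omega>); hence q^|\<omega>| = |\<Sigma>\<down>(\<omega>)| |Im \<partial>^\<omega>_k|.  Together with
  p/(1 - p) = q x/(1 - x) this turns the random-cluster weight of \<omega> into a constant multiple of
  \<rho>[\<omega>] |\<Sigma>\<down>(\<omega>)|.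
*)

theory Submission
  imports Defs
begin

section \<open>Symmetries of the cube\<close>

definition sym_id :: "(nat \<Rightarrow> nat) \<times> (nat \<Rightarrow> bool)" where
  "sym_id = (id, \<lambda>_. False)"

definition sym_comp :: "(nat \<Rightarrow> nat) \<times> (nat \<Rightarrow> bool) \<Rightarrow> (nat \<Rightarrow> nat) \<times> (nat \<Rightarrow> bool)
    \<Rightarrow> (nat \<Rightarrow> nat) \<times> (nat \<Rightarrow> bool)" where
  "sym_comp g h = (fst h \<circ> fst g, \<lambda>i. snd h (fst g i) \<noteq> snd g i)"

definition sym_inv :: "(nat \<Rightarrow> nat) \<times> (nat \<Rightarrow> bool) \<Rightarrow> (nat \<Rightarrow> nat) \<times> (nat \<Rightarrow> bool)" where
  "sym_inv g = (inv (fst g), \<lambda>i. snd g (inv (fst g) i))"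

lemma sym_id_in_SymG: "sym_id \<in> SymG j"
  by (simp add: sym_id_def SymG_def permutes_id)

lemma sym_comp_in_SymG: "g \<in> SymG j \<Longrightarrow> h \<in> SymG j \<Longrightarrow> sym_comp g h \<in> SymG j"
  unfolding SymG_def sym_comp_def by (auto simp: permutes_compose permutes_not_in)

lemma sym_inv_in_SymG: "g \<in> SymG j \<Longrightarrow> sym_inv g \<in> SymG j"
  unfolding SymG_def sym_inv_def by (auto simp: permutes_inv permutes_not_in[OF permutes_inv])

lemma sym_comp_sym_inv_sym_comp: "g \<in> SymG j \<Longrightarrow> sym_comp g (sym_comp (sym_inv g) h) = h"
  unfolding SymG_def sym_inv_def sym_comp_def by (auto simp: permutes_inverses fun_eq_iff prod_eq_iff)

lemma length_act [simp]: "length (act j g xs) = j"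
  by (simp add: act_def)

lemma act_sym_comp:
  assumes "g \<in> SymG j" "h \<in> SymG j" "length xs = j"
  shows "act j g (act j h xs) = act j (sym_comp g h) xs"
proof -
  have "fst g i < j" if "i < j" for i
    using permutes_in_image assms(1) that by (fastforce simp: SymG_def)
  then show ?thesis
    using assms by (auto simp: act_def sym_comp_def intro!: nth_equalityI)
qed

lemma reparam_reparam:
  assumes "g \<in> SymG j" "h \<in> SymG j"
  shows "reparam j (reparam j c g) h = reparam j c (sym_comp g h)"
  using act_sym_comp[OF assms] by (auto simp: reparam_def fun_eq_iff)

lemma reparam_sym_id: "is_par j c \<Longrightarrow> reparam j c sym_id = c"
  by (auto simp: reparam_def is_par_def act_def sym_id_def fun_eq_iff intro!: arg_cong[of _ _ c] nth_equalityI)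

text \<open>The all-false vector detects the reflection bits; the indicator vectors of single
  coordinates then detect the permutation.\<close>

lemma inj_on_reparam:
  assumes c: "is_par j c"
  shows "inj_on (reparam j c) (SymG j)"
proof (rule inj_onI)
  fix g h assume g: "g \<in> SymG j" and h: "h \<in> SymG j" and e: "reparam j c g = reparam j c h"
  have pg: "fst g permutes {..<j}" and ph: "fst h permutes {..<j}"
    using g h by (auto simp: SymG_def)
  have act_eq: "act j g xs = act j h xs" if "length xs = j" for xs
  proof -
    have "c (act j g xs) = c (act j h xs)"
      using fun_cong[OF e, of xs] that by (simp add: reparam_def)
    then show ?thesis using c that by (auto simp: is_par_def cube_def inj_on_def)
  qed
  have coord: "(xs ! fst g i \<noteq> snd g i) = (xs ! fst h i \<noteq> snd h i)" if "length xs = j" "i < j" for xs i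
    using arg_cong[OF act_eq[OF that(1)], of "\<lambda>l. l ! i"] that(2) by (simp add: act_def)
  have in_range: "fst g i < j" "fst h i < j" if "i < j" for i
    using permutes_in_image[OF pg] permutes_in_image[OF ph] that by auto
  have snd_eq: "snd g i = snd h i" for i
  proof (cases "i < j")
    case True
    then show ?thesis using coord[of "replicate j False" i] in_range[OF True] by simp
  next
    case False
    then show ?thesis using g h by (auto simp: SymG_def)
  qed
  have fst_eq: "fst g i = fst h i" for i
  proof (cases "i < j")
    case True
    then show ?thesis
      using coord[of "map (\<lambda>m. m = fst g i) [0..<j]" i] in_range[OF True] snd_eq[of i]
      by (cases "snd h i") auto
  next
    case False
    then show ?thesis using permutes_not_in[OF pg] permutes_not_in[OF ph] by auto
  qed
  show "g = h" using snd_eq fst_eq by (simp add: prod_eq_iff fun_eq_iff)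
qed

lemma neg_one_power_card_eq_prod:
  "(-1::int) ^ card {i. i < (j::nat) \<and> P i} = (\<Prod>i<j. if P i then -1 else 1)"
proof (induction j)
  case (Suc j)
  have "{i. i < Suc j \<and> P i} = (if P j then insert j {i. i < j \<and> P i} else {i. i < j \<and> P i})"
    by (auto simp: less_Suc_eq)
  then show ?case using Suc by (simp add: lessThan_Suc)
qed simp

lemma symsign_sym_comp:
  assumes g: "g \<in> SymG j" and h: "h \<in> SymG j"
  shows "symsign j (sym_comp g h) = symsign j g * symsign j h"
proof -
  have pg: "fst g permutes {..<j}" and ph: "fst h permutes {..<j}"
    using g h by (auto simp: SymG_def)
  let ?\<epsilon> = "\<lambda>b. if b then -1 else 1::int"
  have "sign (fst h \<circ> fst g) = sign (fst h) * sign (fst g)"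
    by (rule sign_compose) (auto intro: permutes_imp_permutation pg ph)
  moreover have "(\<Prod>i<j. ?\<epsilon> (snd h (fst g i) \<noteq> snd g i)) = (\<Prod>i<j. ?\<epsilon> (snd h (fst g i))) * (\<Prod>i<j. ?\<epsilon> (snd g i))"
    unfolding prod.distrib[symmetric] by (rule prod.cong) auto
  moreover have "(\<Prod>i<j. ?\<epsilon> (snd h (fst g i))) = (\<Prod>i<j. ?\<epsilon> (snd h i))"
    using prod.permute[OF pg, of "\<lambda>i. ?\<epsilon> (snd h i)"] by (simp add: o_def)
  ultimately show ?thesis
    by (simp add: symsign_def sym_comp_def neg_one_power_card_eq_prod mult_ac)
qed

lemma symsign_sym_id: "symsign j sym_id = 1"
  by (simp add: symsign_def sym_id_def)

lemma orbit_self: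
  assumes "is_par j c"
  shows "c \<in> orbit j c"
proof -
  have "c = reparam j c sym_id" using assms by (simp add: reparam_sym_id)
  then show ?thesis unfolding orbit_def using sym_id_in_SymG by blast
qed

lemma orbit_reparam:
  assumes g: "g \<in> SymG j"
  shows "orbit j (reparam j c g) = orbit j c"
proof (intro equalityI subsetI)
  fix d assume "d \<in> orbit j (reparam j c g)"
  then obtain h where h: "h \<in> SymG j" and d: "d = reparam j (reparam j c g) h"
    by (auto simp: orbit_def)
  have "d = reparam j c (sym_comp g h)" "sym_comp g h \<in> SymG j"
    using g h d by (simp_all add: reparam_reparam sym_comp_in_SymG)
  then show "d \<in> orbit j c" unfolding orbit_def by blast
next
  fix d assume "d \<in> orbit j c"
  then obtain h where h: "h \<in> SymG j" and d: "d = reparam j c h"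
    by (auto simp: orbit_def)
  have "d = reparam j (reparam j c g) (sym_comp (sym_inv g) h)" "sym_comp (sym_inv g) h \<in> SymG j"
    using g h d by (simp_all add: reparam_reparam sym_comp_in_SymG sym_inv_in_SymG sym_comp_sym_inv_sym_comp)
  then show "d \<in> orbit j (reparam j c g)" unfolding orbit_def by blast
qed

lemma orbit_eq_if_mem:
  assumes "d \<in> orbit j c"
  shows "orbit j d = orbit j c"
proof -
  obtain g where "g \<in> SymG j" "d = reparam j c g" using assms by (auto simp: orbit_def)
  then show ?thesis by (simp add: orbit_reparam)
qed

lemma cubical_complex_is_par: "cubical_complex L \<Longrightarrow> c \<in> L j \<Longrightarrow> is_par j c"
  by (simp add: cubical_complex_def)

lemma cubical_complex_reparam:
  "cubical_complex L \<Longrightarrow> c \<in> L j \<Longrightarrow> g \<in> SymG j \<Longrightarrow> reparam j c g \<in> L j"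
  by (simp add: cubical_complex_def)

lemma cubical_complex_finite: "cubical_complex L \<Longrightarrow> finite (L j)"
  by (simp add: cubical_complex_def)

lemma finite_cells: "cubical_complex L \<Longrightarrow> finite (cells L j)"
  by (simp add: cells_def cubical_complex_finite)

lemma orbit_in_cells: "c \<in> L j \<Longrightarrow> orbit j c \<in> cells L j"
  by (simp add: cells_def)

lemma
  assumes L: "cubical_complex L" and C: "C \<in> cells L j"
  shows rep_in_cell: "rep C \<in> C"
    and cell_subset: "C \<subseteq> L j"
    and orbit_eq_cell: "c \<in> C \<Longrightarrow> orbit j c = C"
proof -
  obtain c0 where c0: "c0 \<in> L j" and C_eq: "C = orbit j c0"
    using C by (auto simp: cells_def)
  show "rep C \<in> C"
    using orbit_self[OF cubical_complex_is_par[OF L c0]] C_eq by (metis rep_def someI)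
  show "C \<subseteq> L j"
    using C_eq c0 cubical_complex_reparam[OF L] by (auto simp: orbit_def)
  show "c \<in> C \<Longrightarrow> orbit j c = C"
    using C_eq orbit_eq_if_mem by blast
qed

lemma rep_in_complex: "cubical_complex L \<Longrightarrow> C \<in> cells L j \<Longrightarrow> rep C \<in> L j"
  using rep_in_cell cell_subset by blast

definition sym_from_rep :: "nat \<Rightarrow> (bool list \<Rightarrow> 'v) \<Rightarrow> (nat \<Rightarrow> nat) \<times> (nat \<Rightarrow> bool)" where
  "sym_from_rep j c = (THE g. g \<in> SymG j \<and> c = reparam j (rep (orbit j c)) g)"

lemma ex1_sym_from_rep:
  assumes L: "cubical_complex L" and c: "c \<in> L j"
  shows "\<exists>!g. g \<in> SymG j \<and> c = reparam j (rep (orbit j c)) g"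
proof -
  let ?C = "orbit j c"
  have C: "?C \<in> cells L j" using c by (rule orbit_in_cells)
  have "c \<in> orbit j (rep ?C)"
    using orbit_eq_cell[OF L C rep_in_cell[OF L C]] orbit_self[OF cubical_complex_is_par[OF L c]] by simp
  then obtain g where g: "g \<in> SymG j" "c = reparam j (rep ?C) g" by (auto simp: orbit_def)
  have inj: "inj_on (reparam j (rep ?C)) (SymG j)"
    by (rule inj_on_reparam[OF cubical_complex_is_par[OF L rep_in_complex[OF L C]]])
  show ?thesis
  proof (rule ex1I)
    show "g \<in> SymG j \<and> c = reparam j (rep ?C) g" using g by simp
  next
    fix h assume "h \<in> SymG j \<and> c = reparam j (rep ?C) h"
    then show "h = g" using g inj_onD[OF inj] by metis
  qed
qed

lemma
  assumes "cubical_complex L" and "c \<in> L j"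
  shows sym_from_rep_in_SymG: "sym_from_rep j c \<in> SymG j"
    and reparam_rep_sym_from_rep: "reparam j (rep (orbit j c)) (sym_from_rep j c) = c"
  using theI'[OF ex1_sym_from_rep[OF assms]] unfolding sym_from_rep_def by auto

lemma sym_from_rep_unique:
  assumes "cubical_complex L" and "c \<in> L j" and "g \<in> SymG j" and "reparam j (rep (orbit j c)) g = c"
  shows "sym_from_rep j c = g"
  using the1_equality[OF ex1_sym_from_rep[OF assms(1,2)]] assms(3,4) unfolding sym_from_rep_def by simp

definition chain_add :: "int \<Rightarrow> ('a \<Rightarrow> int) \<Rightarrow> ('a \<Rightarrow> int) \<Rightarrow> ('a \<Rightarrow> int)" where
  "chain_add q \<sigma> \<tau> = (\<lambda>c. (\<sigma> c + \<tau> c) mod q)"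

definition chain_diff :: "int \<Rightarrow> ('a \<Rightarrow> int) \<Rightarrow> ('a \<Rightarrow> int) \<Rightarrow> ('a \<Rightarrow> int)" where
  "chain_diff q \<sigma> \<tau> = (\<lambda>c. (\<sigma> c - \<tau> c) mod q)"

lemma chains_range: "q > 0 \<Longrightarrow> \<sigma> \<in> chains L q j \<Longrightarrow> 0 \<le> \<sigma> c \<and> \<sigma> c < q"
  unfolding chains_def by (cases "c \<in> L j") auto

lemma zero_in_chains: "q > 0 \<Longrightarrow> (\<lambda>_. 0) \<in> chains L q j"
  unfolding chains_def by auto

lemma bd_zero [simp]: "bd L q j (\<lambda>_. 0) = (\<lambda>_. 0)"
  unfolding bd_def by simp

lemma supp_zero [simp]: "supp L j (\<lambda>_. 0) = {}"
  unfolding supp_def by simp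

lemma supp_subset_cells: "supp L j \<sigma> \<subseteq> cells L j"
  unfolding supp_def by auto

lemma finite_chains:
  assumes "cubical_complex L"
  shows "finite (chains L q j)"
proof (rule finite_subset)
  show "chains L q j \<subseteq> {f. \<forall>c. (c \<in> L j \<longrightarrow> f c \<in> {0..<q}) \<and> (c \<notin> L j \<longrightarrow> f c = 0)}"
    unfolding chains_def by auto
  show "finite {f. \<forall>c. (c \<in> L j \<longrightarrow> f c \<in> {0..<q}) \<and> (c \<notin> L j \<longrightarrow> f c = (0::int))}"
    by (rule finite_set_of_finite_funs) (auto simp: cubical_complex_finite[OF assms])
qed

lemma chain_add_in_chains:
  assumes "q > 0" "\<sigma> \<in> chains L q j" "\<tau> \<in> chains L q j"
  shows "chain_add q \<sigma> \<tau> \<in> chains L q j"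
proof -
  have "(\<sigma> (reparam j c g) + \<tau> (reparam j c g)) mod q = (symsign j g * ((\<sigma> c + \<tau> c) mod q)) mod q"
    if "c \<in> L j" "g \<in> SymG j" for c g
  proof -
    have "\<sigma> (reparam j c g) = (symsign j g * \<sigma> c) mod q" "\<tau> (reparam j c g) = (symsign j g * \<tau> c) mod q"
      using assms that unfolding chains_def by auto
    then show ?thesis by (simp add: mod_add_eq mod_mult_right_eq distrib_left)
  qed
  then show ?thesis using assms unfolding chains_def chain_add_def by auto
qed

lemma chain_diff_in_chains:
  assumes "q > 0" "\<sigma> \<in> chains L q j" "\<tau> \<in> chains L q j"
  shows "chain_diff q \<sigma> \<tau> \<in> chains L q j"
proof -
  have "(\<sigma> (reparam j c g) - \<tau> (reparam j c g)) mod q = (symsign j g * ((\<sigma> c - \<tau> c) mod q)) mod q"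
    if "c \<in> L j" "g \<in> SymG j" for c g
  proof -
    have "\<sigma> (reparam j c g) = (symsign j g * \<sigma> c) mod q" "\<tau> (reparam j c g) = (symsign j g * \<tau> c) mod q"
      using assms that unfolding chains_def by auto
    then show ?thesis by (simp add: mod_diff_eq mod_mult_right_eq right_diff_distrib)
  qed
  then show ?thesis using assms unfolding chains_def chain_diff_def by auto
qed

lemma supp_chain_add: "supp L j (chain_add q \<sigma> \<tau>) \<subseteq> supp L j \<sigma> \<union> supp L j \<tau>"
  unfolding supp_def chain_add_def by (auto, metis mod_0)

lemma supp_chain_diff: "supp L j (chain_diff q \<sigma> \<tau>) \<subseteq> supp L j \<sigma> \<union> supp L j \<tau>"
  unfolding supp_def chain_diff_def by (auto, metis mod_0)

lemma mod_sum_mult_mod: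
  fixes f M :: "'a \<Rightarrow> int"
  shows "(\<Sum>c\<in>A. (f c mod q) * M c) mod q = (\<Sum>c\<in>A. f c * M c) mod q"
proof -
  have "(\<Sum>c\<in>A. (f c mod q) * M c) mod q = (\<Sum>c\<in>A. ((f c mod q) * M c) mod q) mod q"
    by (simp add: mod_sum_eq)
  also have "\<dots> = (\<Sum>c\<in>A. (f c * M c) mod q) mod q"
    by (simp add: mod_mult_left_eq)
  also have "\<dots> = (\<Sum>c\<in>A. f c * M c) mod q"
    by (simp add: mod_sum_eq)
  finally show ?thesis .
qed

lemma bd_chain_add: "bd L q j (chain_add q \<sigma> \<tau>) d = (bd L q j \<sigma> d + bd L q j \<tau> d) mod q"
  unfolding bd_def chain_add_def mod_sum_mult_mod
  by (simp add: distrib_right sum.distrib mod_add_eq)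

lemma bd_chain_diff: "bd L q j (chain_diff q \<sigma> \<tau>) d = (bd L q j \<sigma> d - bd L q j \<tau> d) mod q"
  unfolding bd_def chain_diff_def mod_sum_mult_mod
  by (simp add: left_diff_distrib sum_subtractf mod_diff_eq)

lemma bd_range: "q > 0 \<Longrightarrow> 0 \<le> bd L q j \<sigma> d \<and> bd L q j \<sigma> d < q"
  unfolding bd_def by simp

section \<open>Counting chains supported in a set of cells\<close>

definition chains_within ::
    "(nat \<Rightarrow> (bool list \<Rightarrow> 'v) set) \<Rightarrow> int \<Rightarrow> nat \<Rightarrow> (bool list \<Rightarrow> 'v) set set \<Rightarrow> ((bool list \<Rightarrow> 'v) \<Rightarrow> int) set" where
  "chains_within L q k \<omega> = {\<sigma> \<in> chains L q k. supp L k \<sigma> \<subseteq> \<omega>}"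

text \<open>Prescribing \<open>a C\<close> on the representative of each cell \<open>C \<in> \<omega>\<close> forces the values on all
  other parametrisations by antisymmetry.\<close>

definition chain_of_coeffs :: "(nat \<Rightarrow> (bool list \<Rightarrow> 'v) set) \<Rightarrow> int \<Rightarrow> nat \<Rightarrow> (bool list \<Rightarrow> 'v) set set
    \<Rightarrow> ((bool list \<Rightarrow> 'v) set \<Rightarrow> int) \<Rightarrow> ((bool list \<Rightarrow> 'v) \<Rightarrow> int)" where
  "chain_of_coeffs L q k \<omega> a = (\<lambda>d. if d \<in> L k \<and> orbit k d \<in> \<omega>
      then (symsign k (sym_from_rep k d) * a (orbit k d)) mod q else 0)"

lemma chain_of_coeffs_in_chains_within:
  assumes L: "cubical_complex L" and q: "q > 0"
  shows "chain_of_coeffs L q k \<omega> a \<in> chains_within L q k \<omega>"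
proof -
  let ?\<sigma> = "chain_of_coeffs L q k \<omega> a"
  have antisym: "?\<sigma> (reparam k c g) = (symsign k g * ?\<sigma> c) mod q"
    if c: "c \<in> L k" and g: "g \<in> SymG k" for c g
  proof -
    have d: "reparam k c g \<in> L k" by (rule cubical_complex_reparam[OF L c g])
    have orbit_d: "orbit k (reparam k c g) = orbit k c" by (rule orbit_reparam[OF g])
    show ?thesis
    proof (cases "orbit k c \<in> \<omega>")
      case False
      then show ?thesis using orbit_d by (simp add: chain_of_coeffs_def)
    next
      case True
      let ?h = "sym_from_rep k c"
      have h: "?h \<in> SymG k" "reparam k (rep (orbit k c)) ?h = c"
        using sym_from_rep_in_SymG[OF L c] reparam_rep_sym_from_rep[OF L c] by auto
      have "reparam k (rep (orbit k (reparam k c g))) (sym_comp ?h g) = reparam k c g"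
        using reparam_reparam[OF h(1) g, of "rep (orbit k c)"] h(2) orbit_d by simp
      then have "sym_from_rep k (reparam k c g) = sym_comp ?h g"
        by (rule sym_from_rep_unique[OF L d sym_comp_in_SymG[OF h(1) g]])
      then have "?\<sigma> (reparam k c g) = (symsign k g * (symsign k ?h * a (orbit k c))) mod q"
        using True d orbit_d symsign_sym_comp[OF h(1) g] by (simp add: chain_of_coeffs_def mult_ac)
      also have "\<dots> = (symsign k g * ?\<sigma> c) mod q"
        using True c by (simp add: chain_of_coeffs_def mod_mult_right_eq)
      finally show ?thesis .
    qed
  qed
  have "supp L k ?\<sigma> \<subseteq> \<omega>"
    using orbit_eq_cell[OF L] by (fastforce simp: supp_def chain_of_coeffs_def split: if_splits)
  then show ?thesis
    using antisym q by (auto simp: chains_within_def chains_def chain_of_coeffs_def)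
qed

lemma restrict_chain_of_coeffs:
  assumes L: "cubical_complex L" and \<omega>: "\<omega> \<subseteq> cells L k" and a: "a \<in> \<omega> \<rightarrow>\<^sub>E {0..<q}"
  shows "restrict (\<lambda>C. chain_of_coeffs L q k \<omega> a (rep C)) \<omega> = a"
proof
  fix C
  show "restrict (\<lambda>C. chain_of_coeffs L q k \<omega> a (rep C)) \<omega> C = a C"
  proof (cases "C \<in> \<omega>")
    case True
    then have C_cell: "C \<in> cells L k" using \<omega> by auto
    have rep_C: "rep C \<in> L k" "orbit k (rep C) = C"
      using rep_in_complex[OF L C_cell] orbit_eq_cell[OF L C_cell rep_in_cell[OF L C_cell]] by auto
    have "sym_from_rep k (rep C) = sym_id"
      using sym_from_rep_unique[OF L rep_C(1) sym_id_in_SymG]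
        reparam_sym_id[OF cubical_complex_is_par[OF L rep_C(1)]] rep_C(2) by simp
    then show ?thesis
      using rep_C True PiE_mem[OF a True] by (simp add: chain_of_coeffs_def symsign_sym_id)
  qed (use a PiE_arb in fastforce)
qed

lemma chain_of_coeffs_restrict:
  assumes L: "cubical_complex L" and \<sigma>: "\<sigma> \<in> chains_within L q k \<omega>"
  shows "chain_of_coeffs L q k \<omega> (restrict (\<lambda>C. \<sigma> (rep C)) \<omega>) = \<sigma>"
proof
  fix d
  show "chain_of_coeffs L q k \<omega> (restrict (\<lambda>C. \<sigma> (rep C)) \<omega>) d = \<sigma> d"
  proof (cases "d \<in> L k \<and> orbit k d \<in> \<omega>")
    case True
    have "\<sigma> d = \<sigma> (reparam k (rep (orbit k d)) (sym_from_rep k d))"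
      using reparam_rep_sym_from_rep[OF L] True by simp
    also have "\<dots> = (symsign k (sym_from_rep k d) * \<sigma> (rep (orbit k d))) mod q"
      using \<sigma> True rep_in_complex[OF L orbit_in_cells] sym_from_rep_in_SymG[OF L]
      by (simp add: chains_within_def chains_def)
    finally show ?thesis using True by (simp add: chain_of_coeffs_def)
  next
    case False
    have "\<sigma> d = 0"
    proof (cases "d \<in> L k")
      case True
      then have "orbit k d \<notin> supp L k \<sigma>" using False \<sigma> by (auto simp: chains_within_def)
      then show ?thesis
        using True orbit_in_cells orbit_self[OF cubical_complex_is_par[OF L True]] by (auto simp: supp_def)
    qed (use \<sigma> in \<open>simp add: chains_within_def chains_def\<close>)
    moreover have "chain_of_coeffs L q k \<omega> (restrict (\<lambda>C. \<sigma> (rep C)) \<omega>) d = 0"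
      using False unfolding chain_of_coeffs_def by meson
    ultimately show ?thesis by simp
  qed
qed

lemma card_chains_within:
  assumes L: "cubical_complex L" and q: "q > 0" and \<omega>: "\<omega> \<subseteq> cells L k"
  shows "card (chains_within L q k \<omega>) = nat q ^ card \<omega>"
proof -
  have "bij_betw (\<lambda>\<sigma>. restrict (\<lambda>C. \<sigma> (rep C)) \<omega>) (chains_within L q k \<omega>) (\<omega> \<rightarrow>\<^sub>E {0..<q})"
  proof (rule bij_betw_byWitness[where f' = "chain_of_coeffs L q k \<omega>"])
    show "\<forall>\<sigma>\<in>chains_within L q k \<omega>. chain_of_coeffs L q k \<omega> (restrict (\<lambda>C. \<sigma> (rep C)) \<omega>) = \<sigma>"
      using chain_of_coeffs_restrict[OF L] by blast
    show "\<forall>a\<in>\<omega> \<rightarrow>\<^sub>E {0..<q}. restrict (\<lambda>C. chain_of_coeffs L q k \<omega> a (rep C)) \<omega> = a"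
      using restrict_chain_of_coeffs[OF L \<omega>] by blast
    show "(\<lambda>\<sigma>. restrict (\<lambda>C. \<sigma> (rep C)) \<omega>) ` chains_within L q k \<omega> \<subseteq> \<omega> \<rightarrow>\<^sub>E {0..<q}"
      by (auto simp: chains_within_def chains_range[OF q])
    show "chain_of_coeffs L q k \<omega> ` (\<omega> \<rightarrow>\<^sub>E {0..<q}) \<subseteq> chains_within L q k \<omega>"
      using chain_of_coeffs_in_chains_within[OF L q] by blast
  qed
  then have "card (chains_within L q k \<omega>) = card (\<omega> \<rightarrow>\<^sub>E {0..<q})"
    by (rule bij_betw_same_card)
  also have "\<dots> = nat q ^ card \<omega>"
    using finite_subset[OF \<omega> finite_cells[OF L]] by (simp add: card_PiE)
  finally show ?thesis .
qed

lemma card_eq_card_fibre_mult_card_image: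
  assumes "finite A" and "\<And>y. y \<in> f ` A \<Longrightarrow> card {a \<in> A. f a = y} = n"
  shows "card A = n * card (f ` A)"
proof -
  have "card A = (\<Sum>y\<in>f ` A. \<Sum>a\<in>{a \<in> A. f a = y}. 1)"
    unfolding card_eq_sum by (rule sum.image_gen[OF assms(1)])
  also have "\<dots> = (\<Sum>y\<in>f ` A. n)"
    using assms(2) by simp
  finally show ?thesis by simp
qed

lemma chain_diff_chain_add: "(\<And>c. 0 \<le> \<tau> c \<and> \<tau> c < q) \<Longrightarrow> chain_diff q (chain_add q \<sigma> \<tau>) \<sigma> = \<tau>"
  by (simp add: chain_diff_def chain_add_def mod_diff_left_eq)

lemma chain_add_chain_diff: "(\<And>c. 0 \<le> \<tau> c \<and> \<tau> c < q) \<Longrightarrow> chain_add q \<sigma> (chain_diff q \<tau> \<sigma>) = \<tau>"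
  by (simp add: chain_diff_def chain_add_def mod_add_right_eq)

lemma chain_add_in_chains_within:
  "q > 0 \<Longrightarrow> \<sigma> \<in> chains_within L q k \<omega> \<Longrightarrow> \<tau> \<in> chains_within L q k \<omega>
    \<Longrightarrow> chain_add q \<sigma> \<tau> \<in> chains_within L q k \<omega>"
  using chain_add_in_chains supp_chain_add unfolding chains_within_def by blast

lemma chain_diff_in_chains_within:
  "q > 0 \<Longrightarrow> \<sigma> \<in> chains_within L q k \<omega> \<Longrightarrow> \<tau> \<in> chains_within L q k \<omega>
    \<Longrightarrow> chain_diff q \<sigma> \<tau> \<in> chains_within L q k \<omega>"
  using chain_diff_in_chains supp_chain_diff unfolding chains_within_def by blast

lemma sigma_down_eq: "sigma_down L q k \<omega> = {\<eta> \<in> chains_within L q k \<omega>. bd L q k \<eta> = (\<lambda>_. 0)}"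
  by (auto simp: sigma_down_def cycles_def chains_within_def)

lemma bij_betw_chain_add_sigma_down:
  assumes q: "q > 0" and s: "s \<in> chains_within L q k \<omega>"
  shows "bij_betw (chain_add q s) (sigma_down L q k \<omega>) {\<sigma> \<in> chains_within L q k \<omega>. bd L q k \<sigma> = bd L q k s}"
proof (rule bij_betw_byWitness[where f' = "\<lambda>\<tau>. chain_diff q \<tau> s"])
  have range: "\<And>c. 0 \<le> \<sigma> c \<and> \<sigma> c < q" if "\<sigma> \<in> chains_within L q k \<omega>" for \<sigma>
    using chains_range[OF q] that by (auto simp: chains_within_def)
  show "\<forall>\<eta>\<in>sigma_down L q k \<omega>. chain_diff q (chain_add q s \<eta>) s = \<eta>"
    using chain_diff_chain_add[OF range] by (auto simp: sigma_down_eq)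
  show "\<forall>\<sigma>\<in>{\<sigma> \<in> chains_within L q k \<omega>. bd L q k \<sigma> = bd L q k s}. chain_add q s (chain_diff q \<sigma> s) = \<sigma>"
    using chain_add_chain_diff[OF range] by auto
  show "chain_add q s ` sigma_down L q k \<omega> \<subseteq> {\<sigma> \<in> chains_within L q k \<omega>. bd L q k \<sigma> = bd L q k s}"
    using chain_add_in_chains_within[OF q s]
    by (auto simp: sigma_down_eq bd_chain_add fun_eq_iff bd_range[OF q] mod_pos_pos_trivial)
  show "(\<lambda>\<tau>. chain_diff q \<tau> s) ` {\<sigma> \<in> chains_within L q k \<omega>. bd L q k \<sigma> = bd L q k s} \<subseteq> sigma_down L q k \<omega>"
    using chain_diff_in_chains_within[OF q _ s] by (auto simp: sigma_down_eq bd_chain_diff)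
qed

lemma card_chains_within_eq_card_sigma_down_mult:
  assumes L: "cubical_complex L" and q: "q > 0"
  shows "card (chains_within L q k \<omega>) = card (sigma_down L q k \<omega>) * card (bd L q k ` chains_within L q k \<omega>)"
proof (rule card_eq_card_fibre_mult_card_image)
  show "finite (chains_within L q k \<omega>)"
    using finite_chains[OF L] by (simp add: chains_within_def)
  fix y assume "y \<in> bd L q k ` chains_within L q k \<omega>"
  then obtain s where s: "s \<in> chains_within L q k \<omega>" and "y = bd L q k s" by blast
  then show "card {\<sigma> \<in> chains_within L q k \<omega>. bd L q k \<sigma> = y} = card (sigma_down L q k \<omega>)"
    using bij_betw_same_card[OF bij_betw_chain_add_sigma_down[OF q s]] by simp
qed

section \<open>Bernoulli percolation\<close>

lemma sum_Pow_prod_if: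
  fixes f g :: "'a \<Rightarrow> 'b::comm_semiring_1"
  assumes "finite A"
  shows "(\<Sum>X\<in>Pow A. \<Prod>a\<in>A. if a \<in> X then f a else g a) = (\<Prod>a\<in>A. f a + g a)"
proof -
  have "(\<Prod>a\<in>A. if a \<in> X then f a else g a) = (\<Prod>a\<in>X. f a) * (\<Prod>a\<in>A - X. g a)" if "X \<subseteq> A" for X
    using prod.If_cases[OF assms, of "\<lambda>a. a \<in> X" f g] that
    by (simp add: Int_absorb1 Diff_eq[symmetric] Collect_mem_eq)
  then show ?thesis by (simp add: prod_add[OF assms])
qed

lemma sum_bernoulli_perc_Pow: "finite A \<Longrightarrow> (\<Sum>T\<in>Pow A. bernoulli_perc A x T) = 1"
  by (simp add: bernoulli_perc_def sum_Pow_prod_if)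

lemma bernoulli_perc_cong: "A \<inter> \<omega> = A \<inter> \<omega>' \<Longrightarrow> bernoulli_perc A x \<omega> = bernoulli_perc A x \<omega>'"
  unfolding bernoulli_perc_def by (rule prod.cong) auto

lemma bernoulli_perc_split:
  "finite K \<Longrightarrow> S \<subseteq> K \<Longrightarrow> bernoulli_perc K x \<omega> = bernoulli_perc (K - S) x \<omega> * bernoulli_perc S x \<omega>"
  unfolding bernoulli_perc_def by (rule prod.subset_diff)

lemma bernoulli_perc_open: "S \<subseteq> \<omega> \<Longrightarrow> bernoulli_perc S x \<omega> = (\<Prod>C\<in>S. x C)"
  unfolding bernoulli_perc_def by (rule prod.cong) auto

lemma sum_bernoulli_perc_supersets:
  assumes K: "finite K" and S: "S \<subseteq> K"
  shows "(\<Sum>\<omega>\<in>{\<omega> \<in> Pow K. S \<subseteq> \<omega>}. bernoulli_perc K x \<omega>) = (\<Prod>C\<in>S. x C)"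
proof -
  have supersets: "{\<omega> \<in> Pow K. S \<subseteq> \<omega>} = (\<union>) S ` Pow (K - S)"
    using S by (auto intro!: image_eqI[of _ _ "_ - S"])
  have "inj_on ((\<union>) S) (Pow (K - S))"
    by (rule inj_onI) blast
  then have "(\<Sum>\<omega>\<in>{\<omega> \<in> Pow K. S \<subseteq> \<omega>}. bernoulli_perc K x \<omega>) = (\<Sum>T\<in>Pow (K - S). bernoulli_perc K x (S \<union> T))"
    unfolding supersets by (rule sum.reindex_cong) simp_all
  also have "\<dots> = (\<Sum>T\<in>Pow (K - S). bernoulli_perc (K - S) x T * (\<Prod>C\<in>S. x C))"
  proof (rule sum.cong)
    fix T assume "T \<in> Pow (K - S)"
    then have "bernoulli_perc (K - S) x (S \<union> T) = bernoulli_perc (K - S) x T"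
      by (intro bernoulli_perc_cong) auto
    then show "bernoulli_perc K x (S \<union> T) = bernoulli_perc (K - S) x T * (\<Prod>C\<in>S. x C)"
      by (simp add: bernoulli_perc_split[OF K S] bernoulli_perc_open)
  qed simp
  also have "\<dots> = (\<Prod>C\<in>S. x C)"
    using K by (simp add: sum_distrib_right[symmetric] sum_bernoulli_perc_Pow)
  finally show ?thesis .
qed

lemma union_law_eq:
  assumes K: "finite K" and S: "S \<subseteq> K" and \<omega>: "\<omega> \<subseteq> K"
  shows "union_law K x S \<omega> = (if S \<subseteq> \<omega> then bernoulli_perc (K - S) x \<omega> else 0)"
proof (cases "S \<subseteq> \<omega>")
  case True
  have preimage: "{\<omega>' \<in> Pow K. \<omega>' \<union> S = \<omega>} = (\<lambda>T. (\<omega> - S) \<union> T) ` Pow S"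
    using True \<omega> S by (auto intro!: image_eqI[of _ _ "_ \<inter> S"])
  have "inj_on (\<lambda>T. (\<omega> - S) \<union> T) (Pow S)"
    by (rule inj_onI) blast
  then have "union_law K x S \<omega> = (\<Sum>T\<in>Pow S. bernoulli_perc K x ((\<omega> - S) \<union> T))"
    unfolding union_law_def preimage by (rule sum.reindex_cong) simp_all
  also have "\<dots> = (\<Sum>T\<in>Pow S. bernoulli_perc (K - S) x \<omega> * bernoulli_perc S x T)"
  proof (rule sum.cong)
    fix T assume "T \<in> Pow S"
    then have "bernoulli_perc (K - S) x ((\<omega> - S) \<union> T) = bernoulli_perc (K - S) x \<omega>"
      and "bernoulli_perc S x ((\<omega> - S) \<union> T) = bernoulli_perc S x T"
      by (intro bernoulli_perc_cong; auto)+
    then show "bernoulli_perc K x ((\<omega> - S) \<union> T) = bernoulli_perc (K - S) x \<omega> * bernoulli_perc S x T"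
      by (simp add: bernoulli_perc_split[OF K S])
  qed simp
  also have "\<dots> = bernoulli_perc (K - S) x \<omega>"
    using finite_subset[OF S K] by (simp add: sum_distrib_left[symmetric] sum_bernoulli_perc_Pow)
  finally show ?thesis using True by simp
next
  case False
  then have "{\<omega>' \<in> Pow K. \<omega>' \<union> S = \<omega>} = {}" by auto
  then show ?thesis using False unfolding union_law_def by (simp only: sum.empty if_False)
qed

lemma bernoulli_perc_eq_rho_w:
  assumes K: "finite K" and \<omega>: "\<omega> \<subseteq> K" and x: "\<forall>C\<in>\<omega>. x C < 1"
  shows "bernoulli_perc K x \<omega> = rho_w x \<omega> * (\<Prod>C\<in>K. 1 - x C)"
proof -
  have "bernoulli_perc (K - \<omega>) x \<omega> = (\<Prod>C\<in>K - \<omega>. 1 - x C)"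
    unfolding bernoulli_perc_def by (rule prod.cong) auto
  moreover have "(\<Prod>C\<in>\<omega>. x C) = rho_w x \<omega> * (\<Prod>C\<in>\<omega>. 1 - x C)"
    unfolding rho_w_def prod.distrib[symmetric] using x by (intro prod.cong) auto
  moreover have "(\<Prod>C\<in>K. 1 - x C) = (\<Prod>C\<in>K - \<omega>. 1 - x C) * (\<Prod>C\<in>\<omega>. 1 - x C)"
    by (rule prod.subset_diff[OF \<omega> K])
  ultimately show ?thesis
    by (simp add: bernoulli_perc_split[OF K \<omega>] bernoulli_perc_open)
qed

lemma odds_eq_mult_odds:
  fixes p x q :: real
  assumes "0 < p" "p < 1" "q > 0" "x = p / (p + q * (1 - p))"
  shows "p / (1 - p) = q * (x / (1 - x))"
proof -
  have s: "p + q * (1 - p) > 0" using assms by (simp add: add_pos_pos)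
  then have "1 - x = q * (1 - p) / (p + q * (1 - p))"
    using assms(4) by (simp add: field_simps)
  then have "x / (1 - x) = p / (q * (1 - p))"
    using assms(4) s by simp
  then show ?thesis using assms(2,3) by (simp add: field_simps)
qed

section \<open>The coupling\<close>

lemma joint_w_eq: "joint_w L q k x \<omega> \<eta> = (if \<eta> \<in> sigma_down L q k \<omega> then rho_w x \<omega> else 0)"
  by (simp add: joint_w_def)

locale plaquette_coupling =
  fixes L :: "nat \<Rightarrow> (bool list \<Rightarrow> 'v) set" and q :: int and k :: nat
    and x :: "(bool list \<Rightarrow> 'v) set \<Rightarrow> real"
  assumes complex: "cubical_complex L" and q_pos: "q > 0"
    and x_range: "\<forall>C\<in>cells L k. 0 < x C \<and> x C < 1"
begin

definition total_weight :: real where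
  "total_weight = (\<Sum>\<omega>\<in>Pow (cells L k). \<Sum>\<eta>\<in>cycles L q k. joint_w L q k x \<omega> \<eta>)"

lemma finite_cycles: "finite (cycles L q k)"
  using finite_chains[OF complex] by (simp add: cycles_def)

lemma sigma_down_subset_cycles: "sigma_down L q k \<omega> \<subseteq> cycles L q k"
  by (auto simp: sigma_down_def)

lemma card_sigma_down_pos: "card (sigma_down L q k \<omega>) > 0"
proof -
  have "(\<lambda>_. 0) \<in> sigma_down L q k \<omega>"
    using zero_in_chains[OF q_pos] by (simp add: sigma_down_def cycles_def)
  then show ?thesis
    using finite_subset[OF sigma_down_subset_cycles finite_cycles] card_gt_0_iff by blast
qed

lemma rho_w_pos: "\<omega> \<subseteq> cells L k \<Longrightarrow> rho_w x \<omega> > 0"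
  unfolding rho_w_def using x_range by (intro prod_pos) auto

lemma prod_one_minus_x_pos: "(\<Prod>C\<in>cells L k. 1 - x C) > 0"
  using x_range by (intro prod_pos) auto

lemma prod_supp_pos: "(\<Prod>C\<in>supp L k \<eta>. x C) > 0"
  using x_range supp_subset_cells by (intro prod_pos) blast

lemma sum_joint_w_cycles:
  "(\<Sum>\<eta>\<in>cycles L q k. joint_w L q k x \<omega> \<eta>) = rho_w x \<omega> * card (sigma_down L q k \<omega>)"
proof -
  have "(\<Sum>\<eta>\<in>cycles L q k. joint_w L q k x \<omega> \<eta>) = (\<Sum>\<eta>\<in>cycles L q k \<inter> sigma_down L q k \<omega>. rho_w x \<omega>)"
    unfolding joint_w_eq by (rule sum.inter_restrict[OF finite_cycles, symmetric])
  also have "cycles L q k \<inter> sigma_down L q k \<omega> = sigma_down L q k \<omega>"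
    using sigma_down_subset_cycles by blast
  finally show ?thesis by simp
qed

lemma sum_joint_w_Pow:
  assumes \<eta>: "\<eta> \<in> cycles L q k"
  shows "(\<Sum>\<omega>\<in>Pow (cells L k). joint_w L q k x \<omega> \<eta>)
    = (\<Prod>C\<in>supp L k \<eta>. x C) / (\<Prod>C\<in>cells L k. 1 - x C)"
proof -
  let ?D = "\<Prod>C\<in>cells L k. 1 - x C"
  have "(\<Sum>\<omega>\<in>Pow (cells L k). joint_w L q k x \<omega> \<eta>)
      = (\<Sum>\<omega>\<in>Pow (cells L k). if supp L k \<eta> \<subseteq> \<omega> then rho_w x \<omega> else 0)"
    using \<eta> by (simp add: joint_w_eq sigma_down_def)
  also have "\<dots> = (\<Sum>\<omega>\<in>{\<omega> \<in> Pow (cells L k). supp L k \<eta> \<subseteq> \<omega>}. rho_w x \<omega>)"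
    by (rule sum.inter_filter[symmetric]) (simp add: finite_cells[OF complex])
  also have "\<dots> = (\<Sum>\<omega>\<in>{\<omega> \<in> Pow (cells L k). supp L k \<eta> \<subseteq> \<omega>}. bernoulli_perc (cells L k) x \<omega> / ?D)"
  proof (rule sum.cong)
    fix \<omega> assume "\<omega> \<in> {\<omega> \<in> Pow (cells L k). supp L k \<eta> \<subseteq> \<omega>}"
    then have "bernoulli_perc (cells L k) x \<omega> = rho_w x \<omega> * ?D"
      using x_range by (intro bernoulli_perc_eq_rho_w[OF finite_cells[OF complex]]) auto
    then show "rho_w x \<omega> = bernoulli_perc (cells L k) x \<omega> / ?D"
      using prod_one_minus_x_pos by simp
  qed simp
  also have "\<dots> = (\<Prod>C\<in>supp L k \<eta>. x C) / ?D"
    unfolding sum_divide_distrib[symmetric]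
    by (simp only: sum_bernoulli_perc_supersets[OF finite_cells[OF complex] supp_subset_cells])
  finally show ?thesis .
qed

lemma total_weight_eq_sum_rho_w:
  "total_weight = (\<Sum>\<omega>\<in>Pow (cells L k). rho_w x \<omega> * card (sigma_down L q k \<omega>))"
  by (simp add: total_weight_def sum_joint_w_cycles)

lemma total_weight_eq_sum_prod_supp:
  "total_weight = (\<Sum>\<eta>\<in>cycles L q k. \<Prod>C\<in>supp L k \<eta>. x C) / (\<Prod>C\<in>cells L k. 1 - x C)"
proof -
  have "total_weight = (\<Sum>\<eta>\<in>cycles L q k. \<Sum>\<omega>\<in>Pow (cells L k). joint_w L q k x \<omega> \<eta>)"
    unfolding total_weight_def by (rule sum.swap)
  then show ?thesis by (simp add: sum_joint_w_Pow sum_divide_distrib)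
qed

lemma total_weight_pos: "total_weight > 0"
  unfolding total_weight_eq_sum_rho_w using finite_cells[OF complex] rho_w_pos card_sigma_down_pos
  by (intro sum_pos) auto

lemma jointP_eq: "jointP L q k x \<omega> \<eta> = joint_w L q k x \<omega> \<eta> / total_weight"
  by (simp add: jointP_def total_weight_def)

lemma marg_Omega_eq: "marg_Omega L q k x \<omega> = rho_w x \<omega> * card (sigma_down L q k \<omega>) / total_weight"
  by (simp add: marg_Omega_def jointP_eq sum_divide_distrib[symmetric] sum_joint_w_cycles)

lemma marg_Sigma_eq:
  "\<eta> \<in> cycles L q k \<Longrightarrow> marg_Sigma L q k x \<eta>
    = (\<Prod>C\<in>supp L k \<eta>. x C) / (\<Prod>C\<in>cells L k. 1 - x C) / total_weight"
  by (simp add: marg_Sigma_def jointP_eq sum_divide_distrib[symmetric] sum_joint_w_Pow)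

lemma marg_Sigma_eq_flow_model: "\<eta> \<in> cycles L q k \<Longrightarrow> marg_Sigma L q k x \<eta> = flow_model L q k x \<eta>"
  using prod_one_minus_x_pos
  by (simp add: marg_Sigma_eq total_weight_eq_sum_prod_supp flow_model_def)

lemma cond_given_omega_eq:
  "\<omega> \<subseteq> cells L k \<Longrightarrow> cond_given_omega L q k x \<omega> \<eta>
    = (if \<eta> \<in> sigma_down L q k \<omega> then 1 / real (card (sigma_down L q k \<omega>)) else 0)"
  using rho_w_pos[of \<omega>] total_weight_pos card_sigma_down_pos[of \<omega>]
  by (simp add: cond_given_omega_def marg_Omega_eq jointP_eq joint_w_eq)

lemma cond_given_eta_eq_union_law:
  assumes \<eta>: "\<eta> \<in> cycles L q k" and \<omega>: "\<omega> \<subseteq> cells L k"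
  shows "cond_given_eta L q k x \<eta> \<omega> = union_law (cells L k) x (supp L k \<eta>) \<omega>"
proof -
  let ?K = "cells L k" and ?S = "supp L k \<eta>"
  have K: "finite ?K" by (rule finite_cells[OF complex])
  have "cond_given_eta L q k x \<eta> \<omega>
      = (if ?S \<subseteq> \<omega> then rho_w x \<omega> * (\<Prod>C\<in>?K. 1 - x C) / (\<Prod>C\<in>?S. x C) else 0)"
    using \<eta> total_weight_pos prod_one_minus_x_pos
    by (simp add: cond_given_eta_def jointP_eq marg_Sigma_eq joint_w_eq sigma_down_def)
  also have "\<dots> = (if ?S \<subseteq> \<omega> then bernoulli_perc ?K x \<omega> / (\<Prod>C\<in>?S. x C) else 0)"
    using x_range \<omega> by (subst bernoulli_perc_eq_rho_w[OF K \<omega>]) auto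
  also have "\<dots> = union_law ?K x ?S \<omega>"
  proof (cases "?S \<subseteq> \<omega>")
    case True
    then have "bernoulli_perc ?K x \<omega> = bernoulli_perc (?K - ?S) x \<omega> * (\<Prod>C\<in>?S. x C)"
      using bernoulli_perc_split[OF K supp_subset_cells] bernoulli_perc_open by metis
    then show ?thesis
      using True prod_supp_pos[of \<eta>] by (simp add: union_law_eq[OF K supp_subset_cells \<omega>])
  qed (simp add: union_law_eq[OF K supp_subset_cells \<omega>])
  finally show ?thesis .
qed

lemma rc_weight_eq:
  assumes p: "\<forall>C\<in>cells L k. 0 < p C \<and> p C < 1 \<and> x C = p C / (p C + real_of_int q * (1 - p C))"
    and \<omega>: "\<omega> \<subseteq> cells L k"
  shows "rc_weight L q k p \<omega> = card (cycles L q (k - 1)) * card (sigma_down L q k \<omega>) * rho_w x \<omega>"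
proof -
  let ?I = "bd L q k ` chains_within L q k \<omega>"
  have "card (sigma_down L q k \<omega>) * card ?I = nat q ^ card \<omega>"
    using card_chains_within[OF complex q_pos \<omega>] card_chains_within_eq_card_sigma_down_mult[OF complex q_pos]
    by simp
  then have q_power: "real_of_int q ^ card \<omega> = real (card (sigma_down L q k \<omega>)) * real (card ?I)"
    using q_pos by (metis of_nat_mult of_nat_nat of_nat_power order_less_imp_le)
  have "real_of_int q ^ card \<omega> \<noteq> 0"
    using q_pos by simp
  then have I_nonzero: "real (card ?I) \<noteq> 0"
    using q_power by auto
  have "(\<Prod>C\<in>\<omega>. p C / (1 - p C)) = (\<Prod>C\<in>\<omega>. real_of_int q * (x C / (1 - x C)))"
    using p \<omega> q_pos by (intro prod.cong refl odds_eq_mult_odds) auto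
  also have "\<dots> = real_of_int q ^ card \<omega> * rho_w x \<omega>"
    unfolding rho_w_def prod.distrib by simp
  finally show ?thesis
    using I_nonzero by (simp add: rc_weight_def q_power cycles_def chains_within_def)
qed

lemma marg_Omega_eq_rc_model:
  assumes p: "\<forall>C\<in>cells L k. 0 < p C \<and> p C < 1 \<and> x C = p C / (p C + real_of_int q * (1 - p C))"
    and \<omega>: "\<omega> \<subseteq> cells L k"
  shows "marg_Omega L q k x \<omega> = rc_model L q k p \<omega>"
proof -
  define A where "A = real (card (cycles L q (k - 1)))"
  have "(\<lambda>_. 0) \<in> cycles L q (k - 1)"
    using zero_in_chains[OF q_pos] by (simp add: cycles_def)
  then have A_pos: "A > 0"
    using finite_chains[OF complex] by (auto simp: A_def card_gt_0_iff cycles_def)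
  have "(\<Sum>\<omega>'\<in>Pow (cells L k). rc_weight L q k p \<omega>') = A * total_weight"
    unfolding total_weight_eq_sum_rho_w sum_distrib_left
    using rc_weight_eq[OF p] by (intro sum.cong) (auto simp: A_def mult_ac)
  then show ?thesis
    using A_pos rc_weight_eq[OF p \<omega>] by (simp add: rc_model_def marg_Omega_eq A_def mult_ac)
qed

end

theorem proposition4p7:
  fixes L :: "nat \<Rightarrow> (bool list \<Rightarrow> 'v) set" and k :: nat and q :: int
    and x :: "(bool list \<Rightarrow> 'v) set \<Rightarrow> real"
  assumes "cubical_complex L" and "k \<ge> 1" and "q \<ge> 2"
    and "\<forall>C\<in>cells L k. 0 < x C \<and> x C < 1"
  shows "(\<forall>\<eta>\<in>cycles L q k. marg_Sigma L q k x \<eta> = flow_model L q k x \<eta>)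
    \<and> (\<forall>\<omega>\<in>Pow (cells L k). \<forall>\<eta>\<in>cycles L q k.
          cond_given_omega L q k x \<omega> \<eta> =
            (if \<eta> \<in> sigma_down L q k \<omega> then 1 / real (card (sigma_down L q k \<omega>)) else 0))
    \<and> (\<forall>p. (\<forall>C\<in>cells L k. 0 < p C \<and> p C < 1 \<and> x C = p C / (p C + real_of_int q * (1 - p C)))
          \<longrightarrow> (\<forall>\<omega>\<in>Pow (cells L k). marg_Omega L q k x \<omega> = rc_model L q k p \<omega>))
    \<and> (\<forall>\<eta>\<in>cycles L q k. \<forall>\<omega>\<in>Pow (cells L k).
          cond_given_eta L q k x \<eta> \<omega> = union_law (cells L k) x (supp L k \<eta>) \<omega>)"
proof -
  interpret plaquette_coupling L q k x
    using assms(1,3,4) by unfold_locales simp_all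
  show ?thesis
    using marg_Sigma_eq_flow_model cond_given_omega_eq marg_Omega_eq_rc_model
      cond_given_eta_eq_union_law
    by blast
qed

end
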